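(* For all $n,k\in\mathbb N$, $t\in(0,1)$, and all $\alpha,\beta\subseteq\{1,\dots,n\}$, $$A_{n,k,t}[\alpha]\,A_{n,k,t}[\beta]\ \ge\ A_{n,k,t}[\alpha\cup\beta]\,A_{n,k,t}[\alpha\cap\beta],$$ and all principal minors of $A_{n,k,t}$ are positive.
   Context: For $x\in\mathbb R$, $x_+=\max\{x,0\}$. For $k\in\mathbb{N}$ and $t\in(0,1)$, $A_{\infty,k,t}=(A(i,j))_{i,j\ge1}$ is the infinite Toeplitz Hessenberg matrix with $A(i,j)=a_{j-i}$ for $j\ge i$, $A(i+1,i)=1$, and $A(i,j)=0$ for $i\ge j+2$, where $(a_0,a_1,\ldots)$ is the unique sequence for which the leading principal minors satisfy $\det A(\{1,\dots,n\})=t^{(n-k-1)_+}$ for all $n\in\mathbb N$. $A_{n,k,t}$ is the leading principal $n\times n$ submatrix of $A_{\infty,k,t}$. $A[\alpha]$ denotes the principal minor (determinant) of $A$ with rows and columns indexed by $\alpha$, with $A[\emptyset]=1$. *)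

theory Defs
  imports "Jordan_Normal_Form.DL_Submatrix" "Jordan_Normal_Form.Determinant"
begin

text \<open>Indices are 0-based: row/column i (0-based) corresponds to i+1 in the paper.\<close>
definition toeplitz_hess :: "(nat \<Rightarrow> real) \<Rightarrow> nat \<Rightarrow> real mat" where
  "toeplitz_hess a n = mat n n (\<lambda>(i,j). if i \<le> j then a (j - i) else if i = j + 1 then 1 else 0)"

text \<open>The unique sequence whose leading principal minors are t^((n-k-1)_+), n >= 1.
  Natural-number subtraction n - k - 1 is exactly (n-k-1)_+.\<close>
definition coeff_seq :: "nat \<Rightarrow> real \<Rightarrow> nat \<Rightarrow> real" where
  "coeff_seq k t = (THE a. \<forall>n\<ge>1. det (toeplitz_hess a n) = t ^ (n - k - 1))"

definition A_nkt :: "nat \<Rightarrow> nat \<Rightarrow> real \<Rightarrow> real mat" where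
  "A_nkt n k t = toeplitz_hess (coeff_seq k t) n"

definition pminor :: "real mat \<Rightarrow> nat set \<Rightarrow> real" where
  "pminor M \<alpha> = det (submatrix M \<alpha> \<alpha>)"

end

theory Submission
  imports Defs
begin

text \<open>Laplace expansion along the first row shows that the leading minor of order \<open>m + 1\<close>
  is \<open>(-1)^m a\<^sub>m\<close> plus a polynomial in \<open>a\<^sub>0, \<dots>, a\<^bsub>m-1\<^esub>\<close>, so the prescribed
  leading minors determine the sequence \<open>a\<close> recursively.

  A Toeplitz Hessenberg matrix vanishes strictly below its subdiagonal. Hence if \<open>\<alpha>\<close> splits
  into maximal runs of consecutive indices, the principal submatrix on \<open>\<alpha>\<close> is block upper
  triangular with one diagonal block per run, and the block of a run of length \<open>L\<close> is again
  the leading \<open>L \<times> L\<close> submatrix, with determinant \<open>t^((L-k-1)\<^sub>+)\<close>. Since \<open>(L-k-1)\<^sub>+\<close> is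
  the number of \<open>k + 2\<close> consecutive indices inside a run of length \<open>L\<close>,
  \<open>A[\<alpha>] = t^w(\<alpha>)\<close> where \<open>w(\<alpha>)\<close> counts the \<open>j\<close> with \<open>{j, \<dots>, j+k+1} \<subseteq> \<alpha>\<close>.
  The windows of \<open>\<alpha> \<inter> \<beta>\<close> are exactly the common windows of \<open>\<alpha>\<close> and \<open>\<beta>\<close>, and windows
  of \<open>\<alpha>\<close> or \<open>\<beta>\<close> are windows of \<open>\<alpha> \<union> \<beta>\<close>, so \<open>w\<close> is supermodular; as \<open>0 < t < 1\<close>,
  this is the claimed inequality.\<close>

lemma toeplitz_hess_carrier: "toeplitz_hess a n \<in> carrier_mat n n"
  unfolding toeplitz_hess_def by simp

lemma dim_toeplitz_hess [simp]:
  "dim_row (toeplitz_hess a n) = n" "dim_col (toeplitz_hess a n) = n"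
  unfolding toeplitz_hess_def by simp_all

lemma index_toeplitz_hess [simp]:
  "i < n \<Longrightarrow> j < n \<Longrightarrow> toeplitz_hess a n $$ (i, j) =
     (if i \<le> j then a (j - i) else if i = j + 1 then 1 else 0)"
  unfolding toeplitz_hess_def by simp

lemma toeplitz_hess_cong: "(\<And>j. j < n \<Longrightarrow> a j = b j) \<Longrightarrow> toeplitz_hess a n = toeplitz_hess b n"
  by (rule eq_matI) auto

lemma cofactor_toeplitz_hess_last: "cofactor (toeplitz_hess a (Suc m)) 0 m = (-1) ^ m"
proof -
  let ?M = "mat_delete (toeplitz_hess a (Suc m)) 0 m"
  have M: "?M \<in> carrier_mat m m"
    using mat_delete_carrier[OF toeplitz_hess_carrier, of a "Suc m" 0 m] by simp
  have "upper_triangular ?M"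
    by (rule upper_triangularI) (auto simp: mat_delete_def)
  then have "det ?M = prod_list (diag_mat ?M)"
    using M by (rule det_upper_triangular)
  also have "diag_mat ?M = replicate m 1"
    using M by (auto simp: diag_mat_def mat_delete_def intro: nth_equalityI)
  finally show ?thesis by (simp add: cofactor_def)
qed

lemma det_toeplitz_hess_Suc:
  "det (toeplitz_hess a (Suc m)) = det (toeplitz_hess (a(m := 0)) (Suc m)) + (-1) ^ m * a m"
proof -
  have cof: "cofactor (toeplitz_hess (a(m := 0)) (Suc m)) 0 j = cofactor (toeplitz_hess a (Suc m)) 0 j"
    for j
  proof -
    have "mat_delete (toeplitz_hess (a(m := 0)) (Suc m)) 0 j = mat_delete (toeplitz_hess a (Suc m)) 0 j"
      by (rule eq_matI) (auto simp: mat_delete_def)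
    then show ?thesis by (simp add: cofactor_def)
  qed
  have "det (toeplitz_hess b (Suc m)) =
      (\<Sum>j<m. b j * cofactor (toeplitz_hess b (Suc m)) 0 j) + b m * (-1) ^ m" for b
    by (subst laplace_expansion_row[OF toeplitz_hess_carrier, of 0]) (auto simp: cofactor_toeplitz_hess_last)
  from this[of a] this[of "a(m := 0)"] show ?thesis by (simp add: cof)
qed

lemma toeplitz_hess_leading_minors_unique:
  assumes "\<forall>n\<ge>1. det (toeplitz_hess a n) = g n" and "\<forall>n\<ge>1. det (toeplitz_hess b n) = g n"
  shows "a = b"
proof -
  have "\<forall>j<m. a j = b j" for m
  proof (induction m)
    case (Suc m)
    then have "toeplitz_hess (a(m := 0)) (Suc m) = toeplitz_hess (b(m := 0)) (Suc m)"
      by (intro toeplitz_hess_cong) (auto simp: less_Suc_eq)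
    then have "a m = b m"
      using assms det_toeplitz_hess_Suc[of a m] det_toeplitz_hess_Suc[of b m] by simp
    with Suc show ?case by (simp add: less_Suc_eq)
  qed simp
  then show ?thesis by blast
qed

text \<open>The value stored at index \<open>m\<close> is the one that, by \<open>det_toeplitz_hess_Suc\<close>, makes the
  leading minor of order \<open>m + 1\<close> equal to \<open>g (m + 1)\<close>; later indices are still \<open>0\<close>.\<close>
primrec minor_coeffs :: "(nat \<Rightarrow> real) \<Rightarrow> nat \<Rightarrow> nat \<Rightarrow> real" where
  "minor_coeffs g 0 = (\<lambda>_. 0)"
| "minor_coeffs g (Suc m) = (minor_coeffs g m)
     (m := (-1) ^ m * (g (Suc m) - det (toeplitz_hess (minor_coeffs g m) (Suc m))))"

lemma minor_coeffs_beyond: "m \<le> j \<Longrightarrow> minor_coeffs g m j = 0"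
  by (induction m) auto

lemma minor_coeffs_stable: "j < m \<Longrightarrow> minor_coeffs g m j = minor_coeffs g (Suc j) j"
  by (induction m) (auto simp: less_Suc_eq)

lemma det_toeplitz_hess_minor_coeffs:
  "det (toeplitz_hess (minor_coeffs g (Suc m)) (Suc m)) = g (Suc m)"
proof -
  have "(minor_coeffs g (Suc m))(m := 0) = minor_coeffs g m"
    by (auto simp: minor_coeffs_beyond)
  then show ?thesis
    using det_toeplitz_hess_Suc[of "minor_coeffs g (Suc m)" m]
    by (simp flip: mult.assoc power_add)
qed

lemma toeplitz_hess_leading_minors_exists: "\<exists>a. \<forall>n\<ge>1. det (toeplitz_hess a n) = g n"
proof (intro exI allI impI)
  fix n :: nat
  assume "n \<ge> 1"
  then obtain m where n: "n = Suc m"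
    using not0_implies_Suc by fastforce
  have "toeplitz_hess (\<lambda>j. minor_coeffs g (Suc j) j) n = toeplitz_hess (minor_coeffs g n) n"
    by (rule toeplitz_hess_cong) (simp add: minor_coeffs_stable)
  then show "det (toeplitz_hess (\<lambda>j. minor_coeffs g (Suc j) j) n) = g n"
    using det_toeplitz_hess_minor_coeffs[of g m] by (simp only: n)
qed

lemma det_toeplitz_hess_coeff_seq: "det (toeplitz_hess (coeff_seq k t) n) = t ^ (n - k - 1)"
proof -
  obtain a where a: "\<forall>n\<ge>1. det (toeplitz_hess a n) = t ^ (n - k - 1)"
    using toeplitz_hess_leading_minors_exists[of "\<lambda>n. t ^ (n - k - 1)"] by blast
  have "coeff_seq k t = a"
    unfolding coeff_seq_def
  proof (rule the_equality)
    show "b = a" if "\<forall>n\<ge>1. det (toeplitz_hess b n) = t ^ (n - k - 1)" for b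
      using that a by (rule toeplitz_hess_leading_minors_unique)
  qed (fact a)
  with a show ?thesis
    using det_dim_zero[OF toeplitz_hess_carrier, of a] by (cases "n = 0") simp_all
qed

lemma pick_Un_lower:
  assumes "\<forall>x\<in>\<beta>. \<forall>y\<in>\<gamma>. x < y" "i < card \<beta>"
  shows "pick (\<beta> \<union> \<gamma>) i = pick \<beta> i"
proof -
  have x: "pick \<beta> i \<in> \<beta>" "card {a\<in>\<beta>. a < pick \<beta> i} = i"
    using assms(2) by (rule pick_in_set_le, rule card_pick_le)
  with assms(1) have "{a\<in>\<beta> \<union> \<gamma>. a < pick \<beta> i} = {a\<in>\<beta>. a < pick \<beta> i}"
    by fastforce
  with x pick_card_in_set[of "pick \<beta> i" "\<beta> \<union> \<gamma>"] show ?thesis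
    by simp
qed

lemma pick_Un_upper:
  assumes "finite \<beta>" "\<forall>x\<in>\<beta>. \<forall>y\<in>\<gamma>. x < y" "j < card \<gamma>"
  shows "pick (\<beta> \<union> \<gamma>) (card \<beta> + j) = pick \<gamma> j"
proof -
  have y: "pick \<gamma> j \<in> \<gamma>" "card {a\<in>\<gamma>. a < pick \<gamma> j} = j"
    using assms(3) by (rule pick_in_set_le, rule card_pick_le)
  with assms(2) have "{a\<in>\<beta> \<union> \<gamma>. a < pick \<gamma> j} = \<beta> \<union> {a\<in>\<gamma>. a < pick \<gamma> j}"
    by fastforce
  moreover have "card (\<beta> \<union> {a\<in>\<gamma>. a < pick \<gamma> j}) = card \<beta> + j"
    using assms(1,2) y by (subst card_Un_disjoint) (auto dest: card_ge_0_finite)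
  ultimately show ?thesis
    using y pick_card_in_set[of "pick \<gamma> j" "\<beta> \<union> \<gamma>"] by simp
qed

lemma pick_atLeastAtMost:
  assumes "j < Suc m - c"
  shows "pick {c..m} j = c + j"
proof -
  have "{a\<in>{c..m}. a < c + j} = {c..<c + j}"
    using assms by auto
  with assms pick_card_in_set[of "c + j" "{c..m}"] show ?thesis
    by simp
qed

lemma Collect_less_mem_eq: "I \<subseteq> {0..<n} \<Longrightarrow> {i. i < n \<and> i \<in> I} = I"
  by auto

lemma submatrix_subset_carrier:
  assumes "A \<in> carrier_mat n n" "I \<subseteq> {0..<n}" "J \<subseteq> {0..<n}"
  shows "submatrix A I J \<in> carrier_mat (card I) (card J)"
  using assms(1)
  by (intro carrier_matI)
    (simp_all only: dim_submatrix carrier_matD Collect_less_mem_eq[OF assms(2)] Collect_less_mem_eq[OF assms(3)])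

lemma submatrix_subset_index:
  assumes "A \<in> carrier_mat n n" "I \<subseteq> {0..<n}" "J \<subseteq> {0..<n}" "i < card I" "j < card J"
  shows "submatrix A I J $$ (i, j) = A $$ (pick I i, pick J j)"
  using assms(1,4,5)
  by (intro submatrix_index)
    (simp_all only: carrier_matD Collect_less_mem_eq[OF assms(2)] Collect_less_mem_eq[OF assms(3)])

lemma submatrix_Un_four_block:
  assumes A: "A \<in> carrier_mat n n" and \<beta>: "\<beta> \<subseteq> {0..<n}" and \<gamma>: "\<gamma> \<subseteq> {0..<n}"
    and less: "\<forall>x\<in>\<beta>. \<forall>y\<in>\<gamma>. x < y"
  shows "submatrix A (\<beta> \<union> \<gamma>) (\<beta> \<union> \<gamma>) =
    four_block_mat (submatrix A \<beta> \<beta>) (submatrix A \<beta> \<gamma>) (submatrix A \<gamma> \<beta>) (submatrix A \<gamma> \<gamma>)"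
    (is "?S = four_block_mat ?B11 ?B12 ?B21 ?B22")
proof -
  have fin: "finite \<beta>" "finite \<gamma>"
    using \<beta> \<gamma> finite_subset by blast+
  have card: "card (\<beta> \<union> \<gamma>) = card \<beta> + card \<gamma>"
    using less fin by (intro card_Un_disjoint) auto
  have \<beta>\<gamma>: "\<beta> \<union> \<gamma> \<subseteq> {0..<n}"
    using \<beta> \<gamma> by blast
  note carriers = submatrix_subset_carrier[OF A] submatrix_subset_index[OF A]
  have pick_lower: "pick (\<beta> \<union> \<gamma>) i = pick \<beta> i" if "i < card \<beta>" for i
    using less that by (rule pick_Un_lower)
  have pick_upper: "pick (\<beta> \<union> \<gamma>) i = pick \<gamma> (i - card \<beta>)"
    if "card \<beta> \<le> i" "i < card \<beta> + card \<gamma>" for i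
    using pick_Un_upper[OF fin(1) less, of "i - card \<beta>"] that by simp
  show ?thesis
  proof (rule eq_matI)
    fix i j
    assume "i < dim_row (four_block_mat ?B11 ?B12 ?B21 ?B22)" "j < dim_col (four_block_mat ?B11 ?B12 ?B21 ?B22)"
    then have "i < card \<beta> + card \<gamma>" "j < card \<beta> + card \<gamma>"
      using carriers(1)[OF \<beta> \<beta>] carriers(1)[OF \<gamma> \<gamma>] by auto
    then show "?S $$ (i, j) = four_block_mat ?B11 ?B12 ?B21 ?B22 $$ (i, j)"
      using carriers(1)[OF \<beta> \<beta>] carriers(1)[OF \<gamma> \<gamma>]
      by (auto simp: carriers(2)[OF \<beta>\<gamma> \<beta>\<gamma>] carriers(2)[OF \<beta> \<beta>] carriers(2)[OF \<beta> \<gamma>]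
          carriers(2)[OF \<gamma> \<beta>] carriers(2)[OF \<gamma> \<gamma>] card pick_lower pick_upper)
  qed (use carriers(1)[OF \<beta>\<gamma> \<beta>\<gamma>] carriers(1)[OF \<beta> \<beta>] carriers(1)[OF \<gamma> \<gamma>] card in auto)
qed

lemma pminor_empty: "pminor A {} = 1"
  by (simp add: pminor_def submatrix_def)

lemma pminor_Un_lower_left_zero:
  assumes A: "A \<in> carrier_mat n n" and \<beta>: "\<beta> \<subseteq> {0..<n}" and \<gamma>: "\<gamma> \<subseteq> {0..<n}"
    and less: "\<forall>x\<in>\<beta>. \<forall>y\<in>\<gamma>. x < y" and zero: "\<forall>i\<in>\<gamma>. \<forall>j\<in>\<beta>. A $$ (i, j) = 0"
  shows "pminor A (\<beta> \<union> \<gamma>) = pminor A \<beta> * pminor A \<gamma>"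
proof -
  have lower_left: "submatrix A \<gamma> \<beta> = 0\<^sub>m (card \<gamma>) (card \<beta>)"
  proof (rule eq_matI)
    fix i j
    assume "i < dim_row (0\<^sub>m (card \<gamma>) (card \<beta>))" "j < dim_col (0\<^sub>m (card \<gamma>) (card \<beta>))"
    then have "i < card \<gamma>" "j < card \<beta>"
      by simp_all
    with zero show "submatrix A \<gamma> \<beta> $$ (i, j) = 0\<^sub>m (card \<gamma>) (card \<beta>) $$ (i, j)"
      by (simp add: submatrix_subset_index[OF A \<gamma> \<beta>] pick_in_set_le)
  qed (use submatrix_subset_carrier[OF A \<gamma> \<beta>] in auto)
  show ?thesis
    unfolding pminor_def submatrix_Un_four_block[OF A \<beta> \<gamma> less]
    by (rule det_four_block_mat_lower_left_zero[OF submatrix_subset_carrier[OF A \<beta> \<beta>]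
          submatrix_subset_carrier[OF A \<beta> \<gamma>] lower_left submatrix_subset_carrier[OF A \<gamma> \<gamma>]])
qed

lemma pminor_toeplitz_hess_Un:
  assumes \<beta>: "\<beta> \<subseteq> {0..<n}" and \<gamma>: "\<gamma> \<subseteq> {0..<n}" and gap: "\<forall>x\<in>\<beta>. \<forall>y\<in>\<gamma>. Suc x < y"
  shows "pminor (toeplitz_hess a n) (\<beta> \<union> \<gamma>) = pminor (toeplitz_hess a n) \<beta> * pminor (toeplitz_hess a n) \<gamma>"
proof (rule pminor_Un_lower_left_zero[OF toeplitz_hess_carrier \<beta> \<gamma>])
  show "\<forall>x\<in>\<beta>. \<forall>y\<in>\<gamma>. x < y"
    using gap by fastforce
  show "\<forall>i\<in>\<gamma>. \<forall>j\<in>\<beta>. toeplitz_hess a n $$ (i, j) = 0"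
    using \<beta> \<gamma> gap by fastforce
qed

lemma submatrix_toeplitz_hess_atLeastAtMost:
  assumes "m < n"
  shows "submatrix (toeplitz_hess a n) {c..m} {c..m} = toeplitz_hess a (Suc m - c)"
proof -
  have "{c..m} \<subseteq> {0..<n}"
    using assms by auto
  note sub = submatrix_subset_carrier[OF toeplitz_hess_carrier this this]
    submatrix_subset_index[OF toeplitz_hess_carrier this this]
  show ?thesis
    by (rule eq_matI) (use sub(1) assms in \<open>auto simp: sub(2) pick_atLeastAtMost\<close>)
qed

lemma pminor_toeplitz_hess_atLeastAtMost:
  "m < n \<Longrightarrow> pminor (toeplitz_hess a n) {c..m} = det (toeplitz_hess a (Suc m - c))"
  by (simp add: pminor_def submatrix_toeplitz_hess_atLeastAtMost)

definition windows :: "nat \<Rightarrow> nat set \<Rightarrow> nat set" where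
  "windows k \<alpha> = {j. {j..j + k + 1} \<subseteq> \<alpha>}"

lemma windows_subset: "windows k \<alpha> \<subseteq> \<alpha>"
  unfolding windows_def by auto

lemma windows_mono: "\<alpha> \<subseteq> \<beta> \<Longrightarrow> windows k \<alpha> \<subseteq> windows k \<beta>"
  unfolding windows_def by auto

lemma windows_Int: "windows k (\<alpha> \<inter> \<beta>) = windows k \<alpha> \<inter> windows k \<beta>"
  unfolding windows_def by auto

lemma windows_atLeastAtMost: "windows k {c..m} = {c..<m - k}"
  unfolding windows_def by auto

lemma windows_Un_separated:
  assumes lower: "\<forall>x\<in>\<beta>. Suc x < c" and upper: "\<forall>y\<in>\<gamma>. c \<le> y"
  shows "windows k (\<beta> \<union> \<gamma>) = windows k \<beta> \<union> windows k \<gamma>"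
proof (intro equalityI subsetI)
  fix j
  assume j: "j \<in> windows k (\<beta> \<union> \<gamma>)"
  show "j \<in> windows k \<beta> \<union> windows k \<gamma>"
  proof (cases "j < c")
    case True
    have "{j..j + k + 1} \<subseteq> {..<c}"
    proof
      fix x
      assume x: "x \<in> {j..j + k + 1}"
      show "x \<in> {..<c}"
      proof (rule ccontr)
        assume "x \<notin> {..<c}"
        with x True have "c - 1 \<in> {j..j + k + 1}"
          by auto
        with j have "c - 1 \<in> \<beta> \<union> \<gamma>"
          by (auto simp: windows_def)
        with lower upper True show False
          by fastforce
      qed
    qed
    with j lower upper have "{j..j + k + 1} \<subseteq> \<beta>"
      unfolding windows_def by fastforce
    then show ?thesis
      by (simp add: windows_def)
  next
    case False
    with j lower have "{j..j + k + 1} \<subseteq> \<gamma>"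
      unfolding windows_def by fastforce
    then show ?thesis
      by (simp add: windows_def)
  qed
qed (use windows_mono in blast)

lemma card_windows_supermodular:
  assumes "finite \<alpha>" "finite \<beta>"
  shows "card (windows k \<alpha>) + card (windows k \<beta>) \<le> card (windows k (\<alpha> \<union> \<beta>)) + card (windows k (\<alpha> \<inter> \<beta>))"
proof -
  have fin: "finite (windows k \<gamma>)" if "finite \<gamma>" for \<gamma>
    using that windows_subset finite_subset by blast
  have "card (windows k \<alpha>) + card (windows k \<beta>) =
      card (windows k \<alpha> \<union> windows k \<beta>) + card (windows k \<alpha> \<inter> windows k \<beta>)"
    using assms by (intro card_Un_Int fin)
  also have "\<dots> \<le> card (windows k (\<alpha> \<union> \<beta>)) + card (windows k (\<alpha> \<inter> \<beta>))"
  proof -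
    have "windows k \<alpha> \<union> windows k \<beta> \<subseteq> windows k (\<alpha> \<union> \<beta>)"
      by (intro Un_least windows_mono) auto
    with assms show ?thesis
      by (simp add: windows_Int card_mono fin)
  qed
  finally show ?thesis .
qed

lemma last_run_decomposition:
  assumes "finite \<alpha>" "\<alpha> \<noteq> {}"
  obtains \<beta> c m where "\<alpha> = \<beta> \<union> {c..m}" "c \<le> m" "\<forall>x\<in>\<beta>. Suc x < c"
proof -
  define m where "m = Max \<alpha>"
  define c where "c = (LEAST c. {c..m} \<subseteq> \<alpha>)"
  have m: "m \<in> \<alpha>" "\<forall>x\<in>\<alpha>. x \<le> m"
    using assms by (simp_all add: m_def)
  have run: "{c..m} \<subseteq> \<alpha>"
    unfolding c_def by (rule LeastI[of _ m]) (use m in auto)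
  have cm: "c \<le> m"
    unfolding c_def by (rule Least_le) (use m in auto)
  have gap: "Suc x < c" if x: "x \<in> \<alpha>" "x < c" for x
  proof (rule ccontr)
    assume "\<not> Suc x < c"
    with x have "{x..m} = insert x {c..m}"
      using cm by auto
    with x run have "c \<le> x"
      unfolding c_def by (intro Least_le) simp
    with x show False
      by simp
  qed
  show ?thesis
    by (rule that[of "{x\<in>\<alpha>. x < c}" c m]) (use run cm m gap in auto)
qed

lemma pminor_toeplitz_hess_eq_power:
  assumes det: "\<And>L. det (toeplitz_hess a L) = t ^ (L - k - 1)" and "\<alpha> \<subseteq> {0..<n}"
  shows "pminor (toeplitz_hess a n) \<alpha> = t ^ card (windows k \<alpha>)"
  using assms(2)
proof (induction "card \<alpha>" arbitrary: \<alpha> rule: less_induct)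
  case less
  show ?case
  proof (cases "\<alpha> = {}")
    case True
    then show ?thesis
      using windows_subset[of k "{}"] by (simp add: pminor_empty)
  next
    case False
    have "finite \<alpha>"
      using less.prems finite_subset by blast
    from this False obtain \<beta> c m
      where \<alpha>: "\<alpha> = \<beta> \<union> {c..m}" and cm: "c \<le> m" and gap: "\<forall>x\<in>\<beta>. Suc x < c"
      by (rule last_run_decomposition)
    have \<beta>: "\<beta> \<subseteq> {0..<n}" and run: "{c..m} \<subseteq> {0..<n}" and m: "m < n"
      using less.prems cm by (auto simp: \<alpha>)
    have "m \<in> \<alpha> - \<beta>"
      using gap cm by (fastforce simp: \<alpha>)
    then have "\<beta> \<subset> \<alpha>"
      by (auto simp: \<alpha>)
    with less.prems have "card \<beta> < card \<alpha>"
      by (meson finite_atLeastLessThan finite_subset psubset_card_mono)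
    then have IH: "pminor (toeplitz_hess a n) \<beta> = t ^ card (windows k \<beta>)"
      using \<beta> by (rule less.hyps)
    have windows: "windows k \<alpha> = windows k \<beta> \<union> {c..<m - k}"
      using gap by (simp add: \<alpha> windows_Un_separated windows_atLeastAtMost)
    have "windows k \<beta> \<inter> {c..<m - k} = {}"
      using windows_subset gap by fastforce
    moreover have "finite (windows k \<beta>)"
      using \<beta> windows_subset by (meson finite_atLeastLessThan finite_subset)
    ultimately have card: "card (windows k \<alpha>) = card (windows k \<beta>) + (m - k - c)"
      by (simp add: windows card_Un_disjoint)
    have "\<forall>x\<in>\<beta>. \<forall>y\<in>{c..m}. Suc x < y"
      using gap by fastforce
    then have "pminor (toeplitz_hess a n) \<alpha> = pminor (toeplitz_hess a n) \<beta> * det (toeplitz_hess a (Suc m - c))"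
      by (simp add: \<alpha> pminor_toeplitz_hess_Un[OF \<beta> run] pminor_toeplitz_hess_atLeastAtMost[OF m])
    also have "\<dots> = t ^ card (windows k \<alpha>)"
      by (simp add: IH det card power_add add.commute)
    finally show ?thesis .
  qed
qed

theorem mainTheorem3:
  fixes n k :: nat and t :: real
  assumes "0 < t" and "t < 1"
  shows "(\<forall>\<alpha> \<beta>. \<alpha> \<subseteq> {0..<n} \<longrightarrow> \<beta> \<subseteq> {0..<n} \<longrightarrow>
            pminor (A_nkt n k t) \<alpha> * pminor (A_nkt n k t) \<beta>
              \<ge> pminor (A_nkt n k t) (\<alpha> \<union> \<beta>) * pminor (A_nkt n k t) (\<alpha> \<inter> \<beta>))
       \<and> (\<forall>\<alpha>. \<alpha> \<subseteq> {0..<n} \<longrightarrow> pminor (A_nkt n k t) \<alpha> > 0)"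
proof -
  have formula: "pminor (A_nkt n k t) \<alpha> = t ^ card (windows k \<alpha>)" if "\<alpha> \<subseteq> {0..<n}" for \<alpha>
    unfolding A_nkt_def using det_toeplitz_hess_coeff_seq that by (rule pminor_toeplitz_hess_eq_power)
  show ?thesis
  proof (intro conjI allI impI)
    fix \<alpha> \<beta> :: "nat set"
    assume \<alpha>: "\<alpha> \<subseteq> {0..<n}" and \<beta>: "\<beta> \<subseteq> {0..<n}"
    then have "card (windows k \<alpha>) + card (windows k \<beta>) \<le>
        card (windows k (\<alpha> \<union> \<beta>)) + card (windows k (\<alpha> \<inter> \<beta>))"
      by (meson card_windows_supermodular finite_atLeastLessThan finite_subset)
    then have "t ^ (card (windows k (\<alpha> \<union> \<beta>)) + card (windows k (\<alpha> \<inter> \<beta>))) \<le>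
        t ^ (card (windows k \<alpha>) + card (windows k \<beta>))"
      using assms by (intro power_decreasing) auto
    with \<alpha> \<beta> show "pminor (A_nkt n k t) \<alpha> * pminor (A_nkt n k t) \<beta>
        \<ge> pminor (A_nkt n k t) (\<alpha> \<union> \<beta>) * pminor (A_nkt n k t) (\<alpha> \<inter> \<beta>)"
      by (simp add: formula le_infI1 power_add)
  qed (use assms formula in simp)
qed

end
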